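(* Fix $p\in\mathbb{N}_0$, and let the polynomials $q_{p,\nu}$ and the coefficients $\alpha_{p,\nu},\beta_{p,\nu}$ be defined by the recursive construction described in the context. Then for every integer $\nu\ge1$ with $\nu\le p$, \[ q_{p,\nu-1}^{(\nu)}(\pm1)=\frac{(\pm1)^p}{(-2)^{\nu+1}\,\nu!}\left[\frac{(p+1+\nu)!}{(p+1-\nu)!}\pm\frac{(p+\nu)!}{(p-\nu)!}\right], \] and \[ \alpha_{p,\nu}=\frac{-1}{(-2)^{\nu+1}\,\nu!}\,\frac{(p+1+\nu)!}{(p+1-\nu)!},\qquad \beta_{p,\nu}=\frac{-1}{(-2)^{\nu+1}\,\nu!}\,\frac{(p+\nu)!}{(p-\nu)!}. \]
   Context: $L_j$ denotes the Legendre polynomial of degree $j$ on $(-1,1)$, normalized so that $L_j(1)=1$. The $n$-th primitive of $L_i$ is defined by $\psi_{i,0}:=L_i$ and $\psi_{i,n}(x):=\int_{-1}^x\psi_{i,n-1}(\zeta)\,d\zeta$ for $n\ge1$. Recursive construction: - Set $q_{p,0}:=\tfrac12(L_p+L_{p+1})$. - For $\nu\ge0$, set $q_{p,\nu+1}:=q_{p,\nu}+\alpha_{p,\nu+1}\psi_{p,\nu+1}+\beta_{p,\nu+1}\psi_{p+1,\nu+1}$, where \[ \alpha_{p,\nu+1}:=-\frac{q_{p,\nu}^{(\nu+1)}(1)+(-1)^p q_{p,\nu}^{(\nu+1)}(-1)}{2},\qquad \beta_{p,\nu+1}:=-\frac{q_{p,\nu}^{(\nu+1)}(1)-(-1)^p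 q_{p,\nu}^{(\nu+1)}(-1)}{2}. \] *)

theory Defs
  imports "HOL-Computational_Algebra.Polynomial"
begin

definition legendre :: "nat \<Rightarrow> real poly" where
  "legendre n = smult (1 / (2 ^ n * fact n)) ((pderiv ^^ n) ([:-1, 0, 1:] ^ n))"

text \<open>Formal antiderivative with zero constant term, and the primitive vanishing at -1,
  i.e. the polynomial x mapsto integral from -1 to x.\<close>
definition pint :: "real poly \<Rightarrow> real poly" where
  "pint p = Poly (0 # map (\<lambda>i. coeff p i / real (Suc i)) [0..<Suc (degree p)])"

definition prim :: "real poly \<Rightarrow> real poly" where
  "prim p = pint p - [:poly (pint p) (-1):]"

fun psi :: "nat \<Rightarrow> nat \<Rightarrow> real poly" where
  "psi i 0 = legendre i"
| "psi i (Suc n) = prim (psi i n)"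

definition dval :: "nat \<Rightarrow> real poly \<Rightarrow> real \<Rightarrow> real" where
  "dval k q x = poly ((pderiv ^^ k) q) x"

definition alpha_step :: "nat \<Rightarrow> nat \<Rightarrow> real poly \<Rightarrow> real" where
  "alpha_step p \<nu> q = - (dval (Suc \<nu>) q 1 + (-1) ^ p * dval (Suc \<nu>) q (-1)) / 2"

definition beta_step :: "nat \<Rightarrow> nat \<Rightarrow> real poly \<Rightarrow> real" where
  "beta_step p \<nu> q = - (dval (Suc \<nu>) q 1 - (-1) ^ p * dval (Suc \<nu>) q (-1)) / 2"

fun qpol :: "nat \<Rightarrow> nat \<Rightarrow> real poly" where
  "qpol p 0 = smult (1/2) (legendre p + legendre (Suc p))"
| "qpol p (Suc \<nu>) = qpol p \<nu>
     + smult (alpha_step p \<nu> (qpol p \<nu>)) (psi p (Suc \<nu>))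
     + smult (beta_step p \<nu> (qpol p \<nu>)) (psi (Suc p) (Suc \<nu>))"

fun alpha :: "nat \<Rightarrow> nat \<Rightarrow> real" where
  "alpha p 0 = undefined"
| "alpha p (Suc \<nu>) = alpha_step p \<nu> (qpol p \<nu>)"

fun beta :: "nat \<Rightarrow> nat \<Rightarrow> real" where
  "beta p 0 = undefined"
| "beta p (Suc \<nu>) = beta_step p \<nu> (qpol p \<nu>)"

end

theory Submission
  imports Defs
begin

(* Let b n k = L_n^(k)(1) = (n+k)! / (2^k k! (n-k)!). Expanding (x^2 - 1)^n around x = 1 and
   x = -1 gives L_n^(k)(-1) = (-1)^(n+k) b n k as well. Since psi_{i,j}^(v) = L_i^(v-j) for j <= v,
   the values q_{p,v-1}^(v)(1) and q_{p,v-1}^(v)(-1) are bilinear in b p, b (p+1) and the earlier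
   alpha_{p,j}, beta_{p,j}. Strong induction on v gives alpha_{p,v} = (-1)^v b (p+1) v / 2 and
   beta_{p,v} = (-1)^v b p v / 2: at -1 the sum over the earlier coefficients cancels under the
   reflection j -> v - j, and at +1 it is the coefficient of x^v in
     y_p(x) y_{p+1}(-x) + y_p(-x) y_{p+1}(x) = 2,
   where y_n = sum_k b n k x^k is the Bessel polynomial. This Wronskian-type identity follows by
   induction from the recurrence y_{n+2} = (2n+3) x y_{n+1} + y_n, which is the Legendre identity
   L'_{n+2} = (2n+3) L_{n+1} + L'_n read off at 1. *)

lemma dval_add: "dval k (p + q) x = dval k p x + dval k q x"
  by (simp add: dval_def higher_pderiv_add)

lemma dval_smult: "dval k (smult c p) x = c * dval k p x"
  by (simp add: dval_def higher_pderiv_smult)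

lemma dval_Suc: "dval (Suc k) p x = dval k (pderiv p) x"
  by (simp add: dval_def funpow_Suc_right del: funpow.simps)

lemma higher_pderiv_pcompose_linear:
  "(pderiv ^^ k) (p \<circ>\<^sub>p [:a, b:]) = smult (b ^ k) ((pderiv ^^ k) p \<circ>\<^sub>p [:a, b:])"
  for p :: "'a::{comm_semiring_1, semiring_no_zero_divisors} poly"
  by (induction k) (simp_all add: pderiv_pcompose pderiv_pCons pderiv_smult mult.commute)

lemma dval_eq_coeff_pcompose: "dval k p a = fact k * coeff (p \<circ>\<^sub>p [:a, 1:]) k"
proof -
  have "dval k p a = coeff ((pderiv ^^ k) p \<circ>\<^sub>p [:a, 1:]) 0"
    by (simp add: dval_def)
  also have "\<dots> = coeff ((pderiv ^^ k) (p \<circ>\<^sub>p [:a, 1:])) 0"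
    by (simp add: higher_pderiv_pcompose_linear)
  finally show ?thesis
    by (simp add: coeff_higher_pderiv pochhammer_fact)
qed

lemma pcompose_power: "p ^ n \<circ>\<^sub>p q = (p \<circ>\<^sub>p q) ^ n"
  for p q :: "'a::comm_semiring_1 poly"
  by (induction n) (simp_all add: pcompose_mult pcompose_1)

lemma coeff_monic_linear_poly_power:
  "coeff ([:a, 1:] ^ n) k = of_nat (n choose k) * a ^ (n - k)"
  for a :: "'a::comm_semiring_1"
proof (cases "k \<le> n")
  case False
  then show ?thesis
    by (simp add: coeff_eq_0 degree_linear_power binomial_eq_0)
qed (simp add: coeff_linear_poly_power)

(* The binomial makes bessel_coeff n k vanish for k > n. *)
definition bessel_coeff :: "nat \<Rightarrow> nat \<Rightarrow> real" where
  "bessel_coeff n k = fact (n + k) * of_nat (n choose k) / (2 ^ k * fact n)"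

lemma dval_legendre_unit:
  assumes "a\<^sup>2 = 1"
  shows "dval k (legendre n) a = a ^ (n + k) * bessel_coeff n k"
proof -
  have "[:-1, 0, 1:] \<circ>\<^sub>p [:a, 1:] = [:0, 1:] * [:2 * a, 1:]"
    using assms by (simp add: pcompose_pCons power2_eq_square algebra_simps)
  then have shifted: "[:-1, 0, 1:] ^ n \<circ>\<^sub>p [:a, 1:] = monom 1 n * [:2 * a, 1:] ^ n"
    by (simp only: pcompose_power power_mult_distrib) (simp add: monom_altdef)
  have "dval k (legendre n) a = dval (k + n) ([:-1, 0, 1:] ^ n) a / (2 ^ n * fact n)"
    by (simp add: legendre_def dval_def higher_pderiv_smult funpow_add)
  also have "\<dots> = fact (n + k) * of_nat (n choose k) * (2 * a) ^ (n - k) / (2 ^ n * fact n)"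
    by (simp add: dval_eq_coeff_pcompose shifted coeff_monom_mult coeff_monic_linear_poly_power add.commute)
  finally have "dval k (legendre n) a = fact (n + k) * of_nat (n choose k) * (2 * a) ^ (n - k) / (2 ^ n * fact n)" .
  moreover have "a ^ (n + k) = a ^ (n - k)" and "(2::real) ^ n = 2 ^ k * 2 ^ (n - k)" if "k \<le> n"
  proof -
    have "n + k = (n - k) + 2 * k" and "n = k + (n - k)"
      using that by simp_all
    then have "a ^ (n + k) = a ^ (n - k) * (a\<^sup>2) ^ k" and "(2::real) ^ n = 2 ^ k * 2 ^ (n - k)"
      by (metis power_add power_mult mult.commute)+
    then show "a ^ (n + k) = a ^ (n - k)" and "(2::real) ^ n = 2 ^ k * 2 ^ (n - k)"
      using assms by simp_all
  qed
  ultimately show ?thesis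
    by (cases "k \<le> n") (simp_all add: bessel_coeff_def binomial_eq_0 power_mult_distrib)
qed

lemma pderiv_pderiv_power_x2_minus_1:
  "pderiv (pderiv ([:-1, 0, 1:] ^ Suc (Suc n))) = smult (2 * real (Suc (Suc n)))
    (smult (2 * real n + 3) ([:-1, 0, 1:] ^ Suc n) + smult (2 * real (Suc n)) ([:-1, 0, 1:] ^ n))"
proof -
  define u :: "real poly" where "u = [:-1, 0, 1:]"
  have pderiv_u_power: "pderiv (u ^ Suc m) = smult (2 * real (Suc m)) ([:0, 1:] * u ^ m)" for m
  proof -
    have "pderiv u = smult 2 [:0, 1:]"
      by (simp add: u_def pderiv_pCons)
    then show ?thesis
      by (simp add: pderiv_power_Suc mult.commute del: power_Suc)
  qed
  have "pderiv [:0, 1:] = (1 :: real poly)" and "[:0, 1:] * [:0, 1:] = u + 1"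
    by (simp_all add: pderiv_pCons u_def one_pCons)
  then have "pderiv ([:0, 1:] * u ^ Suc n) = u ^ Suc n + smult (2 * real (Suc n)) ((u + 1) * u ^ n)"
    by (simp only: pderiv_mult pderiv_u_power mult_smult_right mult.assoc[symmetric])
  then have "pderiv (pderiv (u ^ Suc (Suc n))) = smult (2 * real (Suc (Suc n)))
      (smult (2 * real n + 3) (u ^ Suc n) + smult (2 * real (Suc n)) (u ^ n))"
    by (simp only: pderiv_u_power pderiv_smult) (simp add: algebra_simps smult_add_right flip: smult_add_left)
  then show ?thesis
    by (simp only: u_def)
qed

lemma pderiv_legendre_Suc_Suc:
  "pderiv (legendre (Suc (Suc n))) = smult (2 * real n + 3) (legendre (Suc n)) + pderiv (legendre n)"
proof -
  define D where "D m = (pderiv ^^ Suc n) ([:-1, 0, 1:] ^ m :: real poly)" for m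
  define c where "c = 1 / (2 ^ Suc (Suc n) * fact (Suc (Suc n)) :: real)"
  have "pderiv (legendre (Suc (Suc n))) = smult c ((pderiv ^^ Suc n) (pderiv (pderiv ([:-1, 0, 1:] ^ Suc (Suc n)))))"
    by (simp only: legendre_def c_def pderiv_smult funpow_swap1 funpow.simps(2) o_apply)
  also have "\<dots> = smult (c * (2 * real (Suc (Suc n))) * (2 * real n + 3)) (D (Suc n))
      + smult (c * (2 * real (Suc (Suc n))) * (2 * real (Suc n))) (D n)"
    by (simp only: pderiv_pderiv_power_x2_minus_1 D_def higher_pderiv_add higher_pderiv_smult
        smult_add_right smult_smult mult.assoc)
  also have "\<dots> = smult (2 * real n + 3) (legendre (Suc n)) + pderiv (legendre n)"
  proof -
    have "c * (2 * real (Suc (Suc n))) = 1 / (2 ^ Suc n * fact (Suc n))"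
      and "c * (2 * real (Suc (Suc n))) * (2 * real (Suc n)) = 1 / (2 ^ n * fact n)"
      by (simp_all add: c_def divide_simps del: of_nat_Suc)
    moreover have "legendre (Suc n) = smult (1 / (2 ^ Suc n * fact (Suc n))) (D (Suc n))"
      by (simp only: legendre_def D_def)
    moreover have "pderiv (legendre n) = smult (1 / (2 ^ n * fact n)) (D n)"
      by (simp only: legendre_def D_def pderiv_smult funpow.simps(2) o_apply)
    ultimately show ?thesis
      by (simp only: smult_smult mult.commute)
  qed
  finally show ?thesis .
qed

lemma bessel_coeff_0 [simp]: "bessel_coeff n 0 = 1"
  by (simp add: bessel_coeff_def)

lemma bessel_coeff_eq_0: "n < k \<Longrightarrow> bessel_coeff n k = 0"
  by (simp add: bessel_coeff_def binomial_eq_0)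

lemma dval_legendre_one: "dval k (legendre n) 1 = bessel_coeff n k"
  using dval_legendre_unit[of 1] by simp

lemma dval_legendre_minus_one: "dval k (legendre n) (-1) = (-1) ^ (n + k) * bessel_coeff n k"
  using dval_legendre_unit[of "-1"] by simp

lemma bessel_coeff_Suc_Suc:
  "bessel_coeff (Suc (Suc n)) (Suc k) = (2 * real n + 3) * bessel_coeff (Suc n) k + bessel_coeff n (Suc k)"
proof -
  have "dval k (pderiv (legendre (Suc (Suc n)))) 1 =
      (2 * real n + 3) * dval k (legendre (Suc n)) 1 + dval k (pderiv (legendre n)) 1"
    by (simp only: pderiv_legendre_Suc_Suc dval_add dval_smult)
  then show ?thesis
    by (simp only: dval_Suc[symmetric] dval_legendre_one)
qed

definition bessel_poly :: "nat \<Rightarrow> real poly" where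
  "bessel_poly n = (\<Sum>k\<le>n. monom (bessel_coeff n k) k)"

lemma coeff_bessel_poly: "coeff (bessel_poly n) k = bessel_coeff n k"
  by (simp add: bessel_poly_def coeff_sum coeff_monom bessel_coeff_eq_0)

lemma bessel_poly_Suc_Suc:
  "bessel_poly (Suc (Suc n)) = [:0, 2 * real n + 3:] * bessel_poly (Suc n) + bessel_poly n"
proof (rule poly_eqI)
  show "coeff (bessel_poly (Suc (Suc n))) k = coeff ([:0, 2 * real n + 3:] * bessel_poly (Suc n) + bessel_poly n) k" for k
    by (cases k) (simp_all add: coeff_bessel_poly bessel_coeff_Suc_Suc)
qed

lemma bessel_poly_wronskian:
  "bessel_poly n * (bessel_poly (Suc n) \<circ>\<^sub>p [:0, -1:]) + (bessel_poly n \<circ>\<^sub>p [:0, -1:]) * bessel_poly (Suc n) = 2"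
proof (induction n)
  case 0
  have "bessel_poly 0 = 1" and "bessel_poly 1 = [:1, 1:]"
    by (simp_all add: bessel_poly_def bessel_coeff_def monom_0 monom_Suc)
  then show ?case
    by (simp add: pcompose_pCons one_pCons numeral_poly)
next
  case (Suc n)
  have reflected: "bessel_poly (Suc (Suc n)) \<circ>\<^sub>p [:0, -1:] =
      bessel_poly n \<circ>\<^sub>p [:0, -1:] - [:0, 2 * real n + 3:] * (bessel_poly (Suc n) \<circ>\<^sub>p [:0, -1:])"
    by (simp add: bessel_poly_Suc_Suc pcompose_add pcompose_mult pcompose_pCons pcompose_smult pcompose_uminus)
  have "bessel_poly (Suc n) * (bessel_poly (Suc (Suc n)) \<circ>\<^sub>p [:0, -1:])
      + (bessel_poly (Suc n) \<circ>\<^sub>p [:0, -1:]) * bessel_poly (Suc (Suc n))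
    = bessel_poly n * (bessel_poly (Suc n) \<circ>\<^sub>p [:0, -1:]) + (bessel_poly n \<circ>\<^sub>p [:0, -1:]) * bessel_poly (Suc n)"
    unfolding reflected by (simp add: bessel_poly_Suc_Suc algebra_simps)
  with Suc.IH show ?case
    by simp
qed

lemma bessel_coeff_convolution:
  assumes "0 < v"
  shows "(\<Sum>j\<le>v. (-1) ^ j * (bessel_coeff (Suc n) j * bessel_coeff n (v - j)
      + bessel_coeff n j * bessel_coeff (Suc n) (v - j))) = 0"
proof -
  have "coeff (bessel_poly n * (bessel_poly (Suc n) \<circ>\<^sub>p [:0, -1:])
      + (bessel_poly n \<circ>\<^sub>p [:0, -1:]) * bessel_poly (Suc n)) v = 0"
    using assms by (simp only: bessel_poly_wronskian numeral_poly) (simp add: coeff_pCons split: nat.split)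
  then have "(\<Sum>j\<le>v. bessel_coeff n j * ((-1) ^ (v - j) * bessel_coeff (Suc n) (v - j)))
      + (\<Sum>j\<le>v. (-1) ^ j * bessel_coeff n j * bessel_coeff (Suc n) (v - j)) = 0"
    by (simp only: coeff_add coeff_mult coeff_pcompose_linear coeff_bessel_poly mult.assoc)
  moreover have "(\<Sum>j\<le>v. bessel_coeff n j * ((-1) ^ (v - j) * bessel_coeff (Suc n) (v - j)))
      = (\<Sum>j\<le>v. (-1) ^ j * (bessel_coeff (Suc n) j * bessel_coeff n (v - j)))"
    using sum.atLeastAtMost_rev[of "\<lambda>j. bessel_coeff n j * ((-1) ^ (v - j) * bessel_coeff (Suc n) (v - j))" 0 v]
    by (auto simp: atLeast0AtMost mult_ac intro: sum.cong)
  ultimately show ?thesis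
    by (simp only: distrib_left sum.distrib mult.assoc)
qed

lemma pderiv_pint: "pderiv (pint p) = p"
proof (rule poly_eqI)
  fix i
  have "coeff (pint p) (Suc i) = coeff p i / real (Suc i)"
    by (cases "i \<le> degree p") (simp_all add: pint_def nth_default_def coeff_eq_0 del: upt_Suc)
  then show "coeff (pderiv (pint p)) i = coeff p i"
    by (simp add: coeff_pderiv del: of_nat_Suc)
qed

lemma pderiv_prim: "pderiv (prim p) = p"
  by (simp add: prim_def pderiv_diff pderiv_pint pderiv_pCons)

lemma dval_psi: "n \<le> k \<Longrightarrow> dval k (psi i n) x = dval (k - n) (legendre i) x"
proof (induction n arbitrary: k)
  case (Suc n)
  then obtain k' where "k = Suc k'"
    using Suc_le_D by blast
  with Suc show ?case
    by (simp add: dval_Suc pderiv_prim del: psi.simps(1))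
qed simp

lemma dval_qpol:
  assumes "m \<le> v"
  shows "dval v (qpol p m) x = (dval v (legendre p) x + dval v (legendre (Suc p)) x) / 2
    + (\<Sum>j=1..m. alpha p j * dval (v - j) (legendre p) x + beta p j * dval (v - j) (legendre (Suc p)) x)"
  using assms
proof (induction m)
  case 0
  then show ?case
    by (simp add: dval_add dval_smult)
next
  case (Suc m)
  then show ?case
    by (simp add: dval_add dval_smult dval_psi del: psi.simps)
qed

lemma dval_qpol_one:
  assumes alpha: "\<And>j. j \<in> {1..m} \<Longrightarrow> alpha p j = (-1) ^ j / 2 * bessel_coeff (Suc p) j"
    and beta: "\<And>j. j \<in> {1..m} \<Longrightarrow> beta p j = (-1) ^ j / 2 * bessel_coeff p j"
  shows "dval (Suc m) (qpol p m) 1 = (-1) ^ m / 2 * (bessel_coeff (Suc p) (Suc m) + bessel_coeff p (Suc m))"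
proof -
  define X where "X = bessel_coeff (Suc p)"
  define Y where "Y = bessel_coeff p"
  define f where "f j = (-1) ^ j * (X j * Y (Suc m - j) + Y j * X (Suc m - j))" for j
  have "(\<Sum>j=1..m. alpha p j * Y (Suc m - j) + beta p j * X (Suc m - j)) = (\<Sum>j=1..m. f j / 2)"
    by (rule sum.cong) (simp_all add: alpha beta f_def X_def Y_def algebra_simps)
  then have "dval (Suc m) (qpol p m) 1 = (Y (Suc m) + X (Suc m)) / 2 + (\<Sum>j=1..m. f j) / 2"
    using dval_qpol[of m "Suc m" p 1] by (simp add: dval_legendre_one X_def Y_def sum_divide_distrib)
  moreover have "(\<Sum>j\<le>Suc m. f j) = f 0 + (\<Sum>j=1..m. f j) + f (Suc m)"
    by (simp add: atLeast0AtMost[symmetric] sum.atLeast_Suc_atMost)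
  moreover have "(\<Sum>j\<le>Suc m. f j) = 0"
    using bessel_coeff_convolution[of "Suc m" p] by (simp add: f_def X_def Y_def)
  ultimately show ?thesis
    by (simp add: f_def X_def Y_def field_simps)
qed

lemma dval_qpol_minus_one:
  assumes alpha: "\<And>j. j \<in> {1..m} \<Longrightarrow> alpha p j = (-1) ^ j / 2 * bessel_coeff (Suc p) j"
    and beta: "\<And>j. j \<in> {1..m} \<Longrightarrow> beta p j = (-1) ^ j / 2 * bessel_coeff p j"
  shows "dval (Suc m) (qpol p m) (-1) =
    (-1) ^ (p + m) / 2 * (bessel_coeff (Suc p) (Suc m) - bessel_coeff p (Suc m))"
proof -
  define X where "X = bessel_coeff (Suc p)"
  define Y where "Y = bessel_coeff p"
  define g where "g j = X j * Y (Suc m - j) - Y j * X (Suc m - j)" for j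
  have sign: "(-1) ^ j * (-1) ^ (p + (Suc m - j)) = ((-1) ^ (p + Suc m) :: real)" if "j \<le> Suc m" for j
    using that by (simp flip: power_add)
  have "(\<Sum>j=1..m. alpha p j * ((-1) ^ (p + (Suc m - j)) * Y (Suc m - j))
      + beta p j * ((-1) ^ (Suc p + (Suc m - j)) * X (Suc m - j))) = (-1) ^ (p + Suc m) / 2 * (\<Sum>j=1..m. g j)"
    unfolding sum_distrib_left
  proof (rule sum.cong)
    fix j assume j: "j \<in> {1..m}"
    then have "alpha p j * ((-1) ^ (p + (Suc m - j)) * Y (Suc m - j))
        + beta p j * ((-1) ^ (Suc p + (Suc m - j)) * X (Suc m - j))
        = ((-1) ^ j * (-1) ^ (p + (Suc m - j))) / 2 * g j"
      by (simp add: alpha beta g_def X_def Y_def algebra_simps)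
    with j sign[of j] show "alpha p j * ((-1) ^ (p + (Suc m - j)) * Y (Suc m - j))
        + beta p j * ((-1) ^ (Suc p + (Suc m - j)) * X (Suc m - j)) = (-1) ^ (p + Suc m) / 2 * g j"
      by simp
  qed simp
  moreover have "(\<Sum>j=1..m. g j) = 0"
  proof -
    have "(\<Sum>j=1..m. g j) = (\<Sum>j=1..m. g (m + 1 - j))"
      by (rule sum.atLeastAtMost_rev)
    also have "\<dots> = - (\<Sum>j=1..m. g j)"
      by (simp add: g_def Suc_diff_le mult.commute flip: sum_negf)
    finally show ?thesis
      by simp
  qed
  ultimately show ?thesis
    using dval_qpol[of m "Suc m" p "-1"]
    by (simp add: dval_legendre_minus_one X_def Y_def algebra_simps)
qed

lemma alpha_beta_closed_form:
  assumes "1 \<le> \<nu>"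
  shows "alpha p \<nu> = (-1) ^ \<nu> / 2 * bessel_coeff (Suc p) \<nu> \<and> beta p \<nu> = (-1) ^ \<nu> / 2 * bessel_coeff p \<nu>"
  using assms
proof (induction \<nu> rule: less_induct)
  case (less \<nu>)
  then obtain m where \<nu>: "\<nu> = Suc m"
    by (cases \<nu>) auto
  have at_one: "dval (Suc m) (qpol p m) 1 = (-1) ^ m / 2 * (bessel_coeff (Suc p) (Suc m) + bessel_coeff p (Suc m))"
    and at_minus_one: "dval (Suc m) (qpol p m) (-1) =
      (-1) ^ (p + m) / 2 * (bessel_coeff (Suc p) (Suc m) - bessel_coeff p (Suc m))"
    using less.IH \<nu> by (intro dval_qpol_one dval_qpol_minus_one; auto)+
  have "(-1) ^ p * (-1) ^ (p + m) = ((-1) ^ m :: real)"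
    by (simp add: power_add flip: mult.assoc)
  then have "(-1) ^ p * dval (Suc m) (qpol p m) (-1) = (-1) ^ m / 2 * (bessel_coeff (Suc p) (Suc m) - bessel_coeff p (Suc m))"
    unfolding at_minus_one by (simp only: mult.assoc[symmetric] times_divide_eq_right)
  with at_one \<nu> show ?case
    by (simp add: alpha_step_def beta_step_def field_simps)
qed

lemma dval_qpol_closed_form:
  "dval (Suc m) (qpol p m) 1 = (-1) ^ m / 2 * (bessel_coeff (Suc p) (Suc m) + bessel_coeff p (Suc m))
    \<and> dval (Suc m) (qpol p m) (-1) = (-1) ^ (p + m) / 2 * (bessel_coeff (Suc p) (Suc m) - bessel_coeff p (Suc m))"
  using alpha_beta_closed_form by (intro conjI dval_qpol_one dval_qpol_minus_one; simp)

lemma bessel_coeff_scaled: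
  assumes "k \<le> n"
  shows "(-1) ^ (k + 1) / 2 * bessel_coeff n k = 1 / ((-2) ^ (k + 1) * fact k) * (fact (n + k) / fact (n - k))"
proof -
  have "(-2) ^ (k + 1) = (-1) ^ (k + 1) * (2 * 2 ^ k :: real)"
    by (simp add: power_minus')
  then show ?thesis
    using assms by (simp add: bessel_coeff_def binomial_fact field_simps)
qed

theorem lemma6:
  fixes p \<nu> :: nat
  assumes "1 \<le> \<nu>" and "\<nu> \<le> p"
  shows "dval \<nu> (qpol p (\<nu> - 1)) 1 =
           1 / ((-2) ^ (\<nu> + 1) * fact \<nu>) *
           (fact (p + 1 + \<nu>) / fact (p + 1 - \<nu>) + fact (p + \<nu>) / fact (p - \<nu>)) \<and>
         dval \<nu> (qpol p (\<nu> - 1)) (-1) =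
           (-1) ^ p / ((-2) ^ (\<nu> + 1) * fact \<nu>) *
           (fact (p + 1 + \<nu>) / fact (p + 1 - \<nu>) - fact (p + \<nu>) / fact (p - \<nu>)) \<and>
         alpha p \<nu> = -1 / ((-2) ^ (\<nu> + 1) * fact \<nu>) * (fact (p + 1 + \<nu>) / fact (p + 1 - \<nu>)) \<and>
         beta p \<nu> = -1 / ((-2) ^ (\<nu> + 1) * fact \<nu>) * (fact (p + \<nu>) / fact (p - \<nu>))"
proof -
  obtain m where \<nu>: "\<nu> = Suc m"
    using assms(1) by (cases \<nu>) auto
  define D where "D = 1 / ((-2) ^ (\<nu> + 1) * fact \<nu> :: real)"
  have "D * (fact (p + 1 + \<nu>) / fact (p + 1 - \<nu>)) = (-1) ^ (\<nu> + 1) / 2 * bessel_coeff (p + 1) \<nu>"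
    and "D * (fact (p + \<nu>) / fact (p - \<nu>)) = (-1) ^ (\<nu> + 1) / 2 * bessel_coeff p \<nu>"
    unfolding D_def using assms(2) by (simp_all only: bessel_coeff_scaled)
  moreover have "1 / ((-2) ^ (\<nu> + 1) * fact \<nu>) * E = D * E"
    and "(-1) ^ p / ((-2) ^ (\<nu> + 1) * fact \<nu>) * E = (-1) ^ p * (D * E)"
    and "-1 / ((-2) ^ (\<nu> + 1) * fact \<nu>) * E = - (D * E)" for E :: real
    by (simp_all add: D_def)
  moreover have "dval \<nu> (qpol p (\<nu> - 1)) 1 = (-1) ^ (\<nu> + 1) / 2 * (bessel_coeff (p + 1) \<nu> + bessel_coeff p \<nu>)"
    and "dval \<nu> (qpol p (\<nu> - 1)) (-1) =
      (-1) ^ p * ((-1) ^ (\<nu> + 1) / 2 * (bessel_coeff (p + 1) \<nu> - bessel_coeff p \<nu>))"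
    and "alpha p \<nu> = - ((-1) ^ (\<nu> + 1) / 2 * bessel_coeff (p + 1) \<nu>)"
    and "beta p \<nu> = - ((-1) ^ (\<nu> + 1) / 2 * bessel_coeff p \<nu>)"
    using dval_qpol_closed_form[of m p] alpha_beta_closed_form[OF assms(1), of p] \<nu> by (simp_all add: power_add)
  ultimately show ?thesis
    by (simp only: distrib_left right_diff_distrib)
qed

end
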